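(* Let $n\ge4$. The unique $S_n$-submodule of $\mathcal{L}_n$ isomorphic to $\{n-2,2\}$ is $$W_n:=\{Q=(q_{ij})\in\mathcal{L}_n: Q=Q^T,\ q_{ii}=0\ \forall i\},$$ and moreover $W_n=\operatorname{span}_{\mathbb{R}}\big(L_{(ij)(kl)}-L_{(ik)(jl)}: i,j,k,l\in[n]\text{ pairwise distinct}\big)$.
   Context: Let $\mathbf{1}\in\mathbb{R}^n$ be the all-ones column vector and $\mathcal{L}_n=\{Q\in \mathrm{Mat}_n(\mathbb{R}): Q\mathbf{1}=0\}$. For $\sigma\in S_n$, $K_\sigma$ is the permutation matrix with $e_iK_\sigma=e_{\sigma(i)}$ and $L_\sigma:=K_\sigma-I_n$. $S_n$ acts on $\mathcal{L}_n$ by $\sigma\cdot X=K_\sigma^TXK_\sigma$. $\{n-2,2\}$ denotes the irreducible real $S_n$-module labelled by the partition $(n-2,2)$; it occurs with multiplicity one in $\mathcal{L}_n$ for $n\ge4$. *)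

theory Defs
  imports "HOL-Analysis.Analysis" "HOL-Combinatorics.Transposition"
begin

text \<open>Matrices in Mat_n(R) are modelled as real^'n^'n, with the finite type 'n of
  cardinality n playing the role of [n].\<close>

definition ones :: "real^'n" where "ones = (\<chi> i. 1)"

definition Lspace :: "(real^'n^'n) set" where
  "Lspace = {Q. Q *v ones = 0}"

definition Kmat :: "('n \<Rightarrow> 'n) \<Rightarrow> real^'n^'n" where
  "Kmat \<sigma> = (\<chi> i j. if \<sigma> i = j then 1 else 0)"

definition Lmat :: "('n \<Rightarrow> 'n) \<Rightarrow> real^'n^'n" where
  "Lmat \<sigma> = Kmat \<sigma> - mat 1"

definition act :: "('n \<Rightarrow> 'n) \<Rightarrow> real^'n^'n \<Rightarrow> real^'n^'n" where
  "act \<sigma> X = Finite_Cartesian_Product.transpose (Kmat \<sigma>) ** X ** Kmat \<sigma>"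

definition Wn :: "(real^'n^'n) set" where
  "Wn = {Q \<in> Lspace. Finite_Cartesian_Product.transpose Q = Q \<and> (\<forall>i. Q $ i $ i = 0)}"

definition Sn_submodule :: "(real^'n^'n) set \<Rightarrow> bool" where
  "Sn_submodule U \<longleftrightarrow> subspace U \<and> U \<subseteq> Lspace \<and>
     (\<forall>\<sigma>. \<sigma> permutes (UNIV::'n set) \<longrightarrow> (\<forall>X\<in>U. act \<sigma> X \<in> U))"

text \<open>The irreducible module {n-2,2}, realised as the Specht module S^(n-2,2)
  inside the permutation module on 2-subsets of [n] (vectors indexed by subsets of 'n,
  supported on 2-subsets), spanned by the polytabloids of the tableaux with columns
  (a,i),(b,j): {i,j} - {a,j} - {i,b} + {a,b}.\<close>

definition tabloid :: "'n::finite set \<Rightarrow> real^('n set)" where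
  "tabloid T = (\<chi> S. if S = T then 1 else 0)"

definition polytabloid :: "'n::finite \<Rightarrow> 'n \<Rightarrow> 'n \<Rightarrow> 'n \<Rightarrow> real^('n set)" where
  "polytabloid a b i j = tabloid {i,j} - tabloid {a,j} - tabloid {i,b} + tabloid {a,b}"

definition specht :: "(real^('n::finite set)) set" where
  "specht = span {polytabloid a b i j | a b i j. distinct [a,b,i,j]}"

text \<open>S_n action on the permutation module: (sigma f)(S) = f(sigma^-1 S), matching
  (sigma X)_{ij} = X_{sigma^-1 i, sigma^-1 j} on matrices.\<close>
definition act2 :: "('n::finite \<Rightarrow> 'n) \<Rightarrow> real^('n set) \<Rightarrow> real^('n set)" where
  "act2 \<sigma> f = (\<chi> S. f $ (inv \<sigma> ` S))"

definition iso_to_specht :: "(real^'n::finite^'n) set \<Rightarrow> bool" where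
  "iso_to_specht U \<longleftrightarrow> (\<exists>\<phi>. linear \<phi> \<and> bij_betw \<phi> U (specht :: (real^('n set)) set) \<and>
     (\<forall>\<sigma>. \<sigma> permutes (UNIV::'n set) \<longrightarrow> (\<forall>X\<in>U. \<phi> (act \<sigma> X) = act2 \<sigma> (\<phi> X))))"

end

theory Submission
  imports Defs
begin

text \<open>Write \<open>Esym p q\<close> for the symmetric unit matrix \<open>E_pq + E_qp\<close> and
  \<open>polymat a b i j = E_ij - E_aj - E_ib + E_ab\<close> for the matrix analogue of a polytabloid.
  A matrix \<open>Q\<close> of \<open>Wn\<close> is the sum of the \<open>(Q_pq / 2) Esym p q\<close>; since its rows sum to zero,
  each \<open>Esym p q\<close> may be replaced by \<open>Esym p q - f p - f q\<close>, and the corrections \<open>f\<close> can be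
  chosen so that these differences lie in the span of the polymats. So the polymats span \<open>Wn\<close>, and
  \<open>L_(ij)(kl) - L_(ik)(jl)\<close> is itself a polymat. Reading off \<open>Q_pq\<close> on the 2-subset \<open>{p, q}\<close>
  maps \<open>Wn\<close> equivariantly and bijectively onto the Specht module, polymats to polytabloids.

  Conversely, under any equivariant isomorphism of a submodule \<open>U\<close> with the Specht module, the
  preimage of a polytabloid is negated by the two column transpositions and fixed by the swap of
  the columns; for a matrix with zero row sums this forces symmetry and a zero diagonal. These
  preimages span \<open>U\<close>, so \<open>U \<subseteq> Wn\<close>, and equality of dimensions gives \<open>U = Wn\<close>.\<close>

lemma Kmat_nth [simp]: "Kmat \<sigma> $ i $ j = (if \<sigma> i = j then 1 else 0)"
  by (simp add: Kmat_def)

lemma act_nth: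
  assumes "\<sigma> permutes (UNIV :: 'n::finite set)"
  shows "act \<sigma> X $ i $ j = X $ inv \<sigma> i $ inv \<sigma> j"
proof -
  have inv_eq: "\<sigma> a = i \<longleftrightarrow> a = inv \<sigma> i" for a i
    using assms by (metis permutes_inverses)
  have "(Finite_Cartesian_Product.transpose (Kmat \<sigma>) ** X) $ i $ b = X $ inv \<sigma> i $ b" for i b
    by (simp add: matrix_matrix_mult_def transpose_def inv_eq if_distrib[of "\<lambda>x. x * _"] cong: if_cong)
  then show ?thesis
    by (simp add: act_def matrix_matrix_mult_def[of _ "Kmat \<sigma>"] inv_eq
        if_distrib[of "\<lambda>x. _ * x"] cong: if_cong)
qed

lemma act_nth_image:
  assumes "\<sigma> permutes (UNIV :: 'n::finite set)"
  shows "act \<sigma> X $ \<sigma> i $ \<sigma> j = X $ i $ j"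
  using assms by (simp add: act_nth permutes_inverses)

lemma in_Lspace_iff: "Q \<in> Lspace \<longleftrightarrow> (\<forall>i. (\<Sum>j\<in>UNIV. Q $ i $ j) = 0)"
  by (simp add: Lspace_def matrix_vector_mult_def ones_def vec_eq_iff)

lemma in_Wn_iff:
  "Q \<in> Wn \<longleftrightarrow>
    (\<forall>i. (\<Sum>j\<in>UNIV. Q $ i $ j) = 0) \<and> (\<forall>i j. Q $ i $ j = Q $ j $ i) \<and> (\<forall>i. Q $ i $ i = 0)"
  by (auto simp add: Wn_def in_Lspace_iff vec_eq_iff transpose_def)

lemma subspace_Wn: "subspace Wn"
  unfolding subspace_def by (auto simp: in_Wn_iff sum.distrib sum_distrib_left[symmetric])

lemma act_in_Wn:
  assumes "\<sigma> permutes (UNIV :: 'n::finite set)" "X \<in> (Wn :: (real^'n^'n) set)"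
  shows "act \<sigma> X \<in> Wn"
proof -
  have "(\<Sum>j\<in>UNIV. X $ inv \<sigma> i $ inv \<sigma> j) = (\<Sum>j\<in>UNIV. X $ inv \<sigma> i $ j)" for i
    using sum.reindex_bij_betw[of "inv \<sigma>" UNIV UNIV] assms(1)
    by (simp add: permutes_imp_bij permutes_inv)
  moreover have "\<forall>i. (\<Sum>j\<in>UNIV. X $ i $ j) = 0" "\<forall>i j. X $ i $ j = X $ j $ i" "\<forall>i. X $ i $ i = 0"
    using assms(2) unfolding in_Wn_iff by auto
  ultimately show ?thesis
    unfolding in_Wn_iff act_nth[OF assms(1)] by metis
qed

lemma Sn_submodule_Wn: "Sn_submodule Wn"
  unfolding Sn_submodule_def using subspace_Wn act_in_Wn by (auto simp: Wn_def)

definition Esym :: "'n::finite \<Rightarrow> 'n \<Rightarrow> real^'n^'n" where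
  "Esym p q = (\<chi> u v. if {u, v} = {p, q} then 1 else 0)"

lemma Esym_nth: "Esym p q $ u $ v = (if {u, v} = {p, q} then 1 else 0)"
  by (simp add: Esym_def)

lemma Esym_commute: "Esym p q = Esym q p"
  by (simp add: Esym_def insert_commute)

lemma Esym_diag: "p \<noteq> q \<Longrightarrow> Esym p q $ u $ u = 0"
  by (auto simp: Esym_nth doubleton_eq_iff)

lemma Esym_row_sum:
  assumes "p \<noteq> q"
  shows "(\<Sum>v\<in>UNIV. Esym p q $ u $ v) = of_bool (u = p) + of_bool (u = q)"
proof -
  have "Esym p q $ u $ v = of_bool (u = p \<and> v = q) + of_bool (u = q \<and> v = p)" for v
    using assms by (auto simp: Esym_nth doubleton_eq_iff)
  then show ?thesis
    by (simp add: sum.distrib)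
qed

definition polymat :: "'n::finite \<Rightarrow> 'n \<Rightarrow> 'n \<Rightarrow> 'n \<Rightarrow> real^'n^'n" where
  "polymat a b i j = Esym i j - Esym a j - Esym i b + Esym a b"

definition polymats :: "(real^'n::finite^'n) set" where
  "polymats = {polymat a b i j | a b i j. distinct [a, b, i, j]}"

lemma polymat_in_Wn:
  assumes "distinct [a, b, i, j]"
  shows "polymat a b i j \<in> Wn"
  unfolding in_Wn_iff
proof (intro conjI allI)
  from assms have ne: "i \<noteq> j" "a \<noteq> j" "i \<noteq> b" "a \<noteq> b"
    by auto
  show "(\<Sum>v\<in>UNIV. polymat a b i j $ u $ v) = 0" for u
  proof -
    have "(\<Sum>v\<in>UNIV. polymat a b i j $ u $ v) = (\<Sum>v\<in>UNIV. Esym i j $ u $ v)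
        - (\<Sum>v\<in>UNIV. Esym a j $ u $ v) - (\<Sum>v\<in>UNIV. Esym i b $ u $ v) + (\<Sum>v\<in>UNIV. Esym a b $ u $ v)"
      by (simp add: polymat_def sum.distrib sum_subtractf)
    then show ?thesis
      using ne by (simp add: Esym_row_sum)
  qed
  show "polymat a b i j $ u $ v = polymat a b i j $ v $ u" for u v
    by (simp add: polymat_def Esym_nth insert_commute)
  show "polymat a b i j $ u $ u = 0" for u
    using ne by (simp add: polymat_def Esym_diag)
qed

lemma span_polymats_subset_Wn: "span polymats \<subseteq> Wn"
  by (rule span_minimal) (auto simp: polymats_def polymat_in_Wn subspace_Wn)

lemma polymat_in_span_polymats: "distinct [a, b, i, j] \<Longrightarrow> polymat a b i j \<in> span polymats"
  by (rule span_base) (auto simp: polymats_def)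

lemma sum_sum_delta:
  fixes f :: "'a::finite \<Rightarrow> 'b::finite \<Rightarrow> 'c::comm_monoid_add"
  shows "(\<Sum>p\<in>UNIV. \<Sum>q\<in>UNIV. if p = a \<and> q = b then f p q else 0) = f a b"
proof -
  have "(\<Sum>q\<in>UNIV. if p = a \<and> q = b then f p q else 0) = (if p = a then f p b else 0)" for p
    by (cases "p = a") simp_all
  then show ?thesis
    by simp
qed

lemma Wn_Esym_expansion:
  assumes "Q \<in> Wn"
  shows "Q = (\<Sum>p\<in>UNIV. \<Sum>q\<in>UNIV. (Q $ p $ q / 2) *\<^sub>R Esym p q)"
proof -
  have sym: "Q $ v $ u = Q $ u $ v" and diag: "Q $ u $ u = 0" for u v
    using assms by (auto simp: in_Wn_iff)
  have "(\<Sum>p\<in>UNIV. \<Sum>q\<in>UNIV. Q $ p $ q / 2 * Esym p q $ u $ v) = Q $ u $ v" for u v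
  proof (cases "u = v")
    case True
    then have vanish: "Q $ p $ q / 2 * Esym p q $ u $ v = 0" for p q
      by (auto simp: Esym_nth doubleton_eq_iff diag)
    show ?thesis
      unfolding vanish sum.neutral_const using True diag by simp
  next
    case False
    have Esym_uv: "Esym p q $ u $ v
        = (if p = u \<and> q = v then 1 else 0) + (if p = v \<and> q = u then 1 else 0)" for p q
      using False by (cases "p = u"; cases "p = v"; simp add: Esym_nth doubleton_eq_iff)
    show ?thesis
      unfolding Esym_uv
      by (simp add: distrib_left sum.distrib if_distrib[of "\<lambda>x. _ * x"] sum_sum_delta sym[of u v]
          cong: if_cong)
  qed
  then show ?thesis
    by (simp add: vec_eq_iff)
qed

lemma obtain_distinct3:
  assumes "CARD('n) \<ge> 3"
  obtains x y z :: "'n::finite" where "distinct [x, y, z]"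
proof -
  obtain S :: "'n set" where "card S = 3"
    using obtain_subset_with_card_n[OF assms] by blast
  then show ?thesis
    using that by (auto simp: card_3_iff)
qed

definition Dmat :: "'n::finite \<Rightarrow> 'n \<Rightarrow> 'n \<Rightarrow> real^'n^'n" where
  "Dmat x p q = Esym p q - Esym p x - Esym q x"

lemma Dmat_commute: "Dmat x p q = Dmat x q p"
  by (simp add: Dmat_def Esym_commute)

lemma Dmat_diff_in_span_polymats:
  assumes "distinct [x, p, q]" "r \<noteq> x" "r \<noteq> p"
  shows "Dmat x p q - Dmat x p r \<in> span polymats"
proof (cases "q = r")
  case False
  have "Dmat x p q - Dmat x p r = polymat x r p q"
    by (simp add: Dmat_def polymat_def Esym_commute[of r x] Esym_commute[of q x])
  then show ?thesis
    using assms False by (simp add: polymat_in_span_polymats)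
qed (simp add: span_zero)

lemma Dmat_congruent:
  assumes "distinct [x, y, z]" "distinct [x, p, q]"
  shows "Dmat x p q - Dmat x y z \<in> span polymats"
proof (cases "p = y")
  case True
  then show ?thesis
    using assms Dmat_diff_in_span_polymats[of x y q z] by auto
next
  case False
  have "Dmat x p q - Dmat x y z = (Dmat x p q - Dmat x p y) + (Dmat x y p - Dmat x y z)"
    by (simp add: Dmat_commute[of x p y])
  also have "\<dots> \<in> span polymats"
    using assms False by (intro span_add Dmat_diff_in_span_polymats) auto
  finally show ?thesis .
qed

text \<open>The corrections are chosen so that \<open>Esym p q - Ecorr x y z p - Ecorr x y z q\<close> lies in the
  span of the polymats for all \<open>p \<noteq> q\<close>; since the rows of a matrix in \<open>Wn\<close> sum to zero, they
  drop out of its expansion in the \<open>Esym p q\<close>.\<close>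
definition Ecorr :: "'n::finite \<Rightarrow> 'n \<Rightarrow> 'n \<Rightarrow> 'n \<Rightarrow> real^'n^'n" where
  "Ecorr x y z p = (if p = x then - (1/2) *\<^sub>R Dmat x y z else Esym p x + (1/2) *\<^sub>R Dmat x y z)"

lemma Esym_minus_Ecorr_in_span_polymats:
  assumes "distinct [x, y, z]" "p \<noteq> q"
  shows "Esym p q - Ecorr x y z p - Ecorr x y z q \<in> span polymats"
proof (cases "p = x \<or> q = x")
  case True
  then have "Esym p q - Ecorr x y z p - Ecorr x y z q = 0"
    using assms by (auto simp: Ecorr_def Esym_commute)
  then show ?thesis
    by (simp add: span_zero)
next
  case False
  then have "Esym p q - Ecorr x y z p - Ecorr x y z q = Dmat x p q - Dmat x y z"
    by (simp add: Ecorr_def Dmat_def algebra_simps flip: scaleR_left_distrib)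
  then show ?thesis
    using assms False Dmat_congruent[of x y z p q] by auto
qed

lemma Wn_subset_span_polymats:
  assumes "CARD('n::finite) \<ge> 3"
  shows "(Wn :: (real^'n^'n) set) \<subseteq> span polymats"
proof
  fix Q :: "real^'n^'n"
  assume Q: "Q \<in> Wn"
  obtain x y z :: 'n where xyz: "distinct [x, y, z]"
    using obtain_distinct3[OF assms] .
  define c where "c p q = Q $ p $ q / 2" for p q
  define f where "f = Ecorr x y z"
  have rows: "(\<Sum>q\<in>UNIV. c p q) = 0" and cols: "(\<Sum>p\<in>UNIV. c p q) = 0" for p q
    using Q by (auto simp: c_def in_Wn_iff simp flip: sum_divide_distrib)
  have split: "c p q *\<^sub>R Esym p q = c p q *\<^sub>R (Esym p q - f p - f q) + c p q *\<^sub>R f p + c p q *\<^sub>R f q"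
    for p q
    by (simp add: algebra_simps)
  have vanish_p: "(\<Sum>p\<in>UNIV. \<Sum>q\<in>UNIV. c p q *\<^sub>R f p) = 0"
    using rows by (simp flip: scaleR_sum_left)
  have vanish_q: "(\<Sum>p\<in>UNIV. \<Sum>q\<in>UNIV. c p q *\<^sub>R f q) = 0"
    using cols by (subst sum.swap) (simp flip: scaleR_sum_left)
  have "Q = (\<Sum>p\<in>UNIV. \<Sum>q\<in>UNIV. c p q *\<^sub>R Esym p q)"
    using Wn_Esym_expansion[OF Q] by (simp add: c_def)
  also have "\<dots> = (\<Sum>p\<in>UNIV. \<Sum>q\<in>UNIV. c p q *\<^sub>R (Esym p q - f p - f q))"
    unfolding split sum.distrib vanish_p vanish_q by simp
  finally have expansion: "Q = (\<Sum>p\<in>UNIV. \<Sum>q\<in>UNIV. c p q *\<^sub>R (Esym p q - f p - f q))" .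
  have "c p q *\<^sub>R (Esym p q - f p - f q) \<in> span polymats" for p q
  proof (cases "p = q")
    case True
    then show ?thesis
      using Q by (simp add: c_def in_Wn_iff span_zero)
  next
    case False
    then show ?thesis
      unfolding f_def using Esym_minus_Ecorr_in_span_polymats[OF xyz] by (simp add: span_scale)
  qed
  then show "Q \<in> span polymats"
    by (subst expansion) (simp add: span_sum)
qed

lemma Wn_eq_span_polymats:
  assumes "CARD('n::finite) \<ge> 3"
  shows "(Wn :: (real^'n^'n) set) = span polymats"
  using Wn_subset_span_polymats[OF assms] span_polymats_subset_Wn by blast

lemma Lmat_transpositions_diff:
  assumes "distinct [i, j, k, l]"
  shows "Lmat (Transposition.transpose i j \<circ> Transposition.transpose k l)
           - Lmat (Transposition.transpose i k \<circ> Transposition.transpose j l) = polymat l k i j"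
proof -
  have "(if (Transposition.transpose i j \<circ> Transposition.transpose k l) u = v then 1 else 0)
      - (if (Transposition.transpose i k \<circ> Transposition.transpose j l) u = v then 1 else 0)
      = polymat l k i j $ u $ v" for u v
    using assms
    by (cases "u = i"; cases "u = j"; cases "u = k"; cases "u = l";
        simp add: polymat_def Esym_nth doubleton_eq_iff; auto)
  then show ?thesis
    by (simp add: vec_eq_iff Lmat_def)
qed

lemma Lmat_transpositions_diffs_eq_polymats:
  "{Lmat (Transposition.transpose i j \<circ> Transposition.transpose k l)
      - Lmat (Transposition.transpose i k \<circ> Transposition.transpose j l)
    | i j k l. distinct [i, j, k, l]} = (polymats :: (real^'n::finite^'n) set)"
  (is "?L = _")
proof (intro equalityI subsetI)
  fix X :: "real^'n^'n"
  assume "X \<in> ?L"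
  then obtain i j k l where "distinct [i, j, k, l]"
    "X = Lmat (Transposition.transpose i j \<circ> Transposition.transpose k l)
       - Lmat (Transposition.transpose i k \<circ> Transposition.transpose j l)"
    by blast
  then show "X \<in> polymats"
    unfolding polymats_def by (auto simp: Lmat_transpositions_diff)
next
  fix X :: "real^'n^'n"
  assume "X \<in> polymats"
  then obtain a b i j where "distinct [a, b, i, j]" "X = polymat a b i j"
    unfolding polymats_def by blast
  then have "distinct [i, j, b, a] \<and> X = Lmat (Transposition.transpose i j \<circ> Transposition.transpose b a)
      - Lmat (Transposition.transpose i b \<circ> Transposition.transpose j a)"
    using Lmat_transpositions_diff[of i j b a] by auto
  then show "X \<in> ?L"
    by blast
qed

text \<open>On \<open>Wn\<close> this reads off the off-diagonal entries: \<open>to_pairs X $ {p, q} = X $ p $ q\<close>.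
  Summing over all of \<open>S \<times> S\<close> makes it commute with relabelling.\<close>
definition to_pairs :: "real^'n::finite^'n \<Rightarrow> real^('n set)" where
  "to_pairs X = (\<chi> S. if card S = 2 then (\<Sum>p\<in>S. \<Sum>q\<in>S. X $ p $ q) / 2 else 0)"

lemma to_pairs_nth: "to_pairs X $ S = (if card S = 2 then (\<Sum>p\<in>S. \<Sum>q\<in>S. X $ p $ q) / 2 else 0)"
  by (simp add: to_pairs_def)

lemma to_pairs_doubleton:
  assumes "u \<noteq> v"
  shows "to_pairs X $ {u, v} = (X $ u $ u + X $ u $ v + X $ v $ u + X $ v $ v) / 2"
  using assms by (simp add: to_pairs_nth)

lemma linear_to_pairs: "linear to_pairs"
  by (rule linearI) (simp_all add: vec_eq_iff to_pairs_nth sum.distrib add_divide_distrib sum_distrib_left)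

lemma tabloid_nth: "tabloid T $ S = (if S = T then 1 else 0)"
  by (simp add: tabloid_def)

lemma to_pairs_Esym:
  assumes "p \<noteq> q"
  shows "to_pairs (Esym p q) = tabloid {p, q}"
proof -
  have "to_pairs (Esym p q) $ S = tabloid {p, q} $ S" for S
  proof (cases "card S = 2")
    case True
    then obtain u v where S: "S = {u, v}" "u \<noteq> v"
      by (auto simp: card_2_iff)
    moreover have "Esym p q $ u $ v = tabloid {p, q} $ S" "Esym p q $ v $ u = tabloid {p, q} $ S"
      using S by (simp_all add: Esym_nth tabloid_nth insert_commute)
    ultimately show ?thesis
      using assms by (simp add: to_pairs_doubleton Esym_diag)
  next
    case False
    then have "S \<noteq> {p, q}"
      using assms by auto
    with False show ?thesis
      by (simp add: to_pairs_nth tabloid_nth)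
  qed
  then show ?thesis
    by (simp add: vec_eq_iff)
qed

lemma to_pairs_polymat:
  assumes "distinct [a, b, i, j]"
  shows "to_pairs (polymat a b i j) = polytabloid a b i j"
proof -
  have "i \<noteq> j" "a \<noteq> j" "i \<noteq> b" "a \<noteq> b"
    using assms by auto
  then show ?thesis
    by (simp add: polymat_def polytabloid_def linear_diff[OF linear_to_pairs]
      linear_add[OF linear_to_pairs] to_pairs_Esym)
qed

lemma to_pairs_image_polymats:
  "to_pairs ` polymats = {polytabloid a b i j | a b i j. distinct [a, b, i, (j :: 'n::finite)]}"
  (is "_ = ?P")
proof
  show "to_pairs ` polymats \<subseteq> ?P"
    by (fastforce simp: polymats_def to_pairs_polymat)
  show "?P \<subseteq> to_pairs ` polymats"
  proof
    fix t
    assume "t \<in> ?P"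
    then obtain a b i j where "distinct [a, b, i, j]" "t = polytabloid a b i j"
      by blast
    then show "t \<in> to_pairs ` polymats"
      by (intro image_eqI[of t to_pairs "polymat a b i j"]) (auto simp: to_pairs_polymat polymats_def)
  qed
qed

lemma to_pairs_image_Wn:
  assumes "CARD('n::finite) \<ge> 3"
  shows "to_pairs ` (Wn :: (real^'n^'n) set) = specht"
  unfolding Wn_eq_span_polymats[OF assms] specht_def
    span_linear_image[OF linear_to_pairs, symmetric] to_pairs_image_polymats ..

lemma inj_on_to_pairs_Wn: "inj_on to_pairs Wn"
  unfolding linear_inj_on_iff_eq_0[OF linear_to_pairs subspace_Wn]
proof (intro ballI impI)
  fix X :: "real^'n^'n"
  assume X: "X \<in> Wn" and zero: "to_pairs X = 0"
  have "X $ u $ v = 0" for u v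
  proof (cases "u = v")
    case False
    then have "to_pairs X $ {u, v} = X $ u $ v"
      using X by (auto simp: to_pairs_doubleton in_Wn_iff)
    with zero show ?thesis
      by simp
  qed (use X in \<open>simp add: in_Wn_iff\<close>)
  then show "X = 0"
    by (simp add: vec_eq_iff)
qed

lemma to_pairs_act:
  assumes "\<sigma> permutes (UNIV :: 'n::finite set)"
  shows "to_pairs (act \<sigma> X) = act2 \<sigma> (to_pairs (X :: real^'n^'n))"
proof -
  have inj: "inj_on (inv \<sigma>) S" for S
    using assms by (meson bij_is_inj inj_on_subset permutes_inv permutes_imp_bij subset_UNIV)
  have "to_pairs (act \<sigma> X) $ S = to_pairs X $ (inv \<sigma> ` S)" for S
    by (simp add: to_pairs_nth act_nth[OF assms] card_image[OF inj] sum.reindex[OF inj])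
  then show ?thesis
    by (simp add: vec_eq_iff act2_def)
qed

lemma iso_to_specht_Wn:
  assumes "CARD('n::finite) \<ge> 3"
  shows "iso_to_specht (Wn :: (real^'n^'n) set)"
  unfolding iso_to_specht_def bij_betw_def
  using linear_to_pairs inj_on_to_pairs_Wn to_pairs_image_Wn[OF assms] to_pairs_act by blast

lemma linear_act2: "linear (act2 \<sigma>)"
  by (rule linearI) (simp_all add: vec_eq_iff act2_def)

lemma act2_tabloid:
  assumes "bij \<sigma>"
  shows "act2 \<sigma> (tabloid T) = tabloid (\<sigma> ` T)"
proof -
  have "inv \<sigma> ` S = T \<longleftrightarrow> S = \<sigma> ` T" for S
    using assms by (metis bij_is_inj bij_is_surj image_f_inv_f image_inv_f_f)
  then show ?thesis
    by (simp add: vec_eq_iff act2_def tabloid_nth)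
qed

lemma act2_polytabloid:
  assumes "bij \<sigma>"
  shows "act2 \<sigma> (polytabloid a b i j) = polytabloid (\<sigma> a) (\<sigma> b) (\<sigma> i) (\<sigma> j)"
  by (simp add: polytabloid_def linear_add[OF linear_act2] linear_diff[OF linear_act2]
      act2_tabloid[OF assms])

lemma act2_polytabloid_relations:
  assumes "distinct [a, b, i, j]"
  shows "act2 (Transposition.transpose a i) (polytabloid a b i j) = - polytabloid a b i j"
    and "act2 (Transposition.transpose b j) (polytabloid a b i j) = - polytabloid a b i j"
    and "act2 (Transposition.transpose a b \<circ> Transposition.transpose i j) (polytabloid a b i j)
      = polytabloid a b i j"
proof -
  from assms have "distinct [j, i, b, a]"
    by auto
  with assms show "act2 (Transposition.transpose a i) (polytabloid a b i j) = - polytabloid a b i j"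
    and "act2 (Transposition.transpose b j) (polytabloid a b i j) = - polytabloid a b i j"
    and "act2 (Transposition.transpose a b \<circ> Transposition.transpose i j) (polytabloid a b i j)
      = polytabloid a b i j"
    by (simp_all add: act2_polytabloid bij_comp, simp_all add: polytabloid_def insert_commute)
qed

lemma in_Wn_if_polytabloid_relations:
  assumes "distinct [a, b, i, j]" "X \<in> Lspace"
    and col1: "act (Transposition.transpose a i) X = - X"
    and col2: "act (Transposition.transpose b j) X = - X"
    and swap: "act (Transposition.transpose a b \<circ> Transposition.transpose i j) X = X"
  shows "X \<in> Wn"
proof -
  let ?\<rho> = "Transposition.transpose a b \<circ> Transposition.transpose i j"
  have F1: "X $ Transposition.transpose a i p $ Transposition.transpose a i q = - X $ p $ q" for p q
    using act_nth_image[of "Transposition.transpose a i" X p q] col1 by (simp add: permutes_swap_id)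
  have F2: "X $ Transposition.transpose b j p $ Transposition.transpose b j q = - X $ p $ q" for p q
    using act_nth_image[of "Transposition.transpose b j" X p q] col2 by (simp add: permutes_swap_id)
  have F3: "X $ ?\<rho> p $ ?\<rho> q = X $ p $ q" for p q
    using act_nth_image[of ?\<rho> X p q] swap by (simp add: permutes_compose permutes_swap_id)
  have Z1: "X $ p $ q = 0" if "p \<notin> {a, i}" "q \<notin> {a, i}" for p q
    using F1[of p q] that by simp
  have Z2: "X $ p $ q = 0" if "p \<notin> {b, j}" "q \<notin> {b, j}" for p q
    using F2[of p q] that by simp
  have diag: "X $ p $ p = 0" for p
    using Z1[of p p] Z2[of p p] assms(1) by auto
  have "distinct [j, i, b, a]"
    using assms(1) by auto
  note d = assms(1) this
  have ab_ij: "X $ a $ b = X $ b $ a" "X $ i $ j = X $ j $ i"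
    using F3[of a b] F3[of i j] d by simp_all
  have aj: "X $ a $ j = X $ j $ a"
    using F3[of a j] F1[of b i] F2[of b a] d by simp
  have ib: "X $ i $ b = X $ b $ i"
    using F3[of i b] F1[of j a] F2[of j i] d by simp
  have sym: "X $ p $ q = X $ q $ p" for p q
  proof (cases "p \<in> {a, i} \<and> q \<in> {b, j} \<or> p \<in> {b, j} \<and> q \<in> {a, i}")
    case True
    then show ?thesis
      using ab_ij aj ib by auto
  next
    case False
    then have "p \<notin> {a, i} \<and> q \<notin> {a, i} \<or> p \<notin> {b, j} \<and> q \<notin> {b, j}"
      using assms(1) by auto
    then show ?thesis
      using Z1[of p q] Z1[of q p] Z2[of p q] Z2[of q p] by auto
  qed
  show ?thesis
    using assms(2) sym diag unfolding in_Wn_iff in_Lspace_iff by blast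
qed

lemma equivariant_preimage_of_polytabloid_in_Wn:
  assumes U: "Sn_submodule U" and lin: "linear \<psi>" and inj: "inj_on \<psi> U"
    and equiv: "\<And>\<sigma> X. \<sigma> permutes UNIV \<Longrightarrow> X \<in> U \<Longrightarrow> \<psi> (act \<sigma> X) = act2 \<sigma> (\<psi> X)"
    and X: "X \<in> U" "distinct [a, b, i, j]" "\<psi> X = polytabloid a b i j"
  shows "X \<in> Wn"
proof -
  have sub: "subspace U"
    and closed: "\<And>\<sigma> X. \<sigma> permutes UNIV \<Longrightarrow> X \<in> U \<Longrightarrow> act \<sigma> X \<in> U"
    using U unfolding Sn_submodule_def by auto
  have eigen: "act \<tau> X = c *\<^sub>R X" if "\<tau> permutes UNIV" "act2 \<tau> (\<psi> X) = c *\<^sub>R \<psi> X" for \<tau> c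
    using inj_onD[OF inj _ closed[OF that(1) X(1)] subspace_scale[OF sub X(1)]]
      equiv[OF that(1) X(1)] that(2) by (simp add: linear_scale[OF lin])
  note rel = act2_polytabloid_relations[OF X(2), folded X(3)]
  show ?thesis
  proof (rule in_Wn_if_polytabloid_relations[OF X(2)])
    show "X \<in> Lspace"
      using U X(1) by (auto simp: Sn_submodule_def)
    show "act (Transposition.transpose a i) X = - X" "act (Transposition.transpose b j) X = - X"
      using eigen[of _ "-1"] rel(1,2) by (simp_all add: permutes_swap_id)
    show "act (Transposition.transpose a b \<circ> Transposition.transpose i j) X = X"
      using eigen[of _ 1] rel(3) by (simp add: permutes_compose permutes_swap_id)
  qed
qed

lemma iso_to_specht_subset_Wn:
  assumes "Sn_submodule U" "iso_to_specht (U :: (real^'n::finite^'n) set)"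
  shows "U \<subseteq> Wn"
proof -
  have sub: "subspace U"
    using assms(1) by (simp add: Sn_submodule_def)
  obtain \<psi> where lin: "linear \<psi>" and inj: "inj_on \<psi> U" and img: "\<psi> ` U = specht"
    and equiv: "\<And>\<sigma> X. \<sigma> permutes UNIV \<Longrightarrow> X \<in> U \<Longrightarrow> \<psi> (act \<sigma> X) = act2 \<sigma> (\<psi> X)"
    using assms(2) unfolding iso_to_specht_def bij_betw_def by blast
  define P where "P = {polytabloid a b i j | a b i j. distinct [a, b, i, (j :: 'n)]}"
  define B where "B = U \<inter> \<psi> -` P"
  have "B \<subseteq> Wn"
    using equivariant_preimage_of_polytabloid_in_Wn[OF assms(1) lin inj equiv]
    by (auto simp: B_def P_def)
  have "P \<subseteq> \<psi> ` U"
    unfolding img specht_def P_def by (rule span_superset)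
  then have "\<psi> ` B = P"
    unfolding B_def by blast
  then have span_B: "\<psi> ` span B = \<psi> ` U"
    unfolding img specht_def P_def span_linear_image[OF lin, symmetric] by simp
  have "U \<subseteq> span B"
  proof
    fix Y
    assume Y: "Y \<in> U"
    then have "\<psi> Y \<in> \<psi> ` span B"
      unfolding span_B by blast
    then obtain Y' where "Y' \<in> span B" "\<psi> Y' = \<psi> Y"
      by (metis imageE)
    moreover have "span B \<subseteq> U"
      using sub by (simp add: B_def span_minimal)
    ultimately show "Y \<in> span B"
      using inj_onD[OF inj _ _ Y] by auto
  qed
  also have "span B \<subseteq> Wn"
    using \<open>B \<subseteq> Wn\<close> subspace_Wn by (rule span_minimal)
  finally show ?thesis .
qed

lemma dim_eq_dim_specht:
  assumes "subspace U" "iso_to_specht (U :: (real^'n::finite^'n) set)"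
  shows "dim U = dim (specht :: (real^('n set)) set)"
proof -
  obtain \<psi> :: "real^'n^'n \<Rightarrow> real^('n set)" where lin: "linear \<psi>" and inj: "inj_on \<psi> U"
    and img: "\<psi> ` U = specht"
    using assms(2) unfolding iso_to_specht_def bij_betw_def by blast
  have span_U: "span U = U"
    using assms(1) by (rule span_eq_iff[THEN iffD2])
  have "dim (\<psi> ` U) = dim U"
    by (rule dim_image_eq[OF lin]) (simp only: span_U inj)
  then show ?thesis
    by (simp only: img)
qed

lemma Sn_submodule_iso_to_specht_eq_Wn:
  assumes "CARD('n::finite) \<ge> 3" "Sn_submodule U" "iso_to_specht (U :: (real^'n^'n) set)"
  shows "U = Wn"
proof (rule subspace_dim_equal)
  show "subspace U"
    using assms(2) by (simp add: Sn_submodule_def)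
  show "U \<subseteq> Wn"
    using assms(2,3) by (rule iso_to_specht_subset_Wn)
  show "dim (Wn :: (real^'n^'n) set) \<le> dim U"
    using dim_eq_dim_specht[OF \<open>subspace U\<close> assms(3)]
      dim_eq_dim_specht[OF subspace_Wn iso_to_specht_Wn[OF assms(1)]] by simp
qed (rule subspace_Wn)

theorem mainTheorem12:
  assumes "CARD('n::finite) \<ge> 4"
  shows "Sn_submodule (Wn :: (real^'n^'n) set) \<and> iso_to_specht (Wn :: (real^'n^'n) set)
    \<and> (\<forall>U :: (real^'n^'n) set. Sn_submodule U \<and> iso_to_specht U \<longrightarrow> U = Wn)
    \<and> (Wn :: (real^'n^'n) set) = span {Lmat (Transposition.transpose i j \<circ> Transposition.transpose k l)
           - Lmat (Transposition.transpose i k \<circ> Transposition.transpose j l)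
           | i j k l. distinct [i, j, k, l]}"
proof -
  have card: "CARD('n) \<ge> 3"
    using assms by simp
  show ?thesis
    unfolding Lmat_transpositions_diffs_eq_polymats
    using Sn_submodule_Wn iso_to_specht_Wn[OF card] Sn_submodule_iso_to_specht_eq_Wn[OF card]
      Wn_eq_span_polymats[OF card] by blast
qed

end
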